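(* Let $T_{init}$ be the number of nodes of the initial tree. The expected optimization time of SMO-GP-single and of SMO-GP-multi on MO-MAJORITY is $O(n\,T_{init}+n^2\log n)$.
   Context: Fix an integer $n\ge 1$; the terminal set is $T=\{x_1,\bar x_1,\dots,x_n,\bar x_n\}$ ($\bar x_i$ the complement of $x_i$). A syntax tree is either the empty tree or a rooted ordered binary tree whose inner nodes are all labelled by the binary function $J$ (join, exactly two ordered children) and whose leaves are labelled by elements of $T$. The complexity $C(X)$ is the number of nodes of $X$ (0 for the empty tree). The leaf list $l$ of $X$ is the sequence of leaf labels in inorder. MAJORITY$(X)$ is the number of indices $i$ such that $x_i$ occurs in $l$ at least once and at least as often as $\bar x_i$. MO-MAJORITY$(X)=(\mathrm{MAJORITY}(X),C(X))$, MAJORITY maximized, $C$ minimized. Mutation (HVL-Prime applied $k$ times): each application chooses uniformly at random one of three operations. Substitute: replace a uniformly random leaf by a uniformly random $u\in T$. Insert: choose a uniformly random node $v$ and uniformly random $u\in T$, replace $v$ by a $J$-node with children $u$ and $v$ in uniformly random order (inserting into the empty tree yields the single leaf $u$). Delete: choose a uniformly random leaf $v$ with parent $p$ and sibling $u$, replace $p$ by $u$ (deleting $p$ and $v$; deleting the only leaf of a one-leaf tree yields the empty tree). For single-operation mutation $k=1$; for multi-operation mutation $k=1+\mathrm{Pois}(1)$ with $\mathrm{Pois}(1)$ Poisson with mean 1. Dominance for MO-$F$: $Y\succeq X$ iff $F(Y)\ge F(X)$ and $C(Y)\le C(X)$; $Y\succ X$ iff $Y\succeq X$ and ($F(Y)>F(X)$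 or $C(Y)<C(X)$). A tree is Pareto optimal if no tree dominates it; the Pareto front is the set of objective vectors of Pareto optimal trees. SMO-GP: choose an initial tree $X$ and set $P:=\{X\}$; repeat: choose $X\in P$ uniformly at random, let $Y$ be a mutated copy of $X$; if no $Z\in P$ satisfies $Z\succ Y$, set $P:=(P\setminus\{Z\in P: Y\succeq Z\})\cup\{Y\}$. SMO-GP-single uses single-operation, SMO-GP-multi multi-operation mutation. Expected optimization time: expected number of iterations until the population contains, for every objective vector in the Pareto front, a tree with that objective vector. *)

theory Defs
  imports "HOL-Probability.Probability"
begin

text \<open>Literals: (i, True) is x_i, (i, False) is the complement of x_i; i ranges over 1..n.\<close>
type_synonym lit = "nat \<times> bool"

text \<open>Non-empty syntax trees; a syntax tree is a tree option (None = empty tree).\<close>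
datatype tree = Lf lit | J tree tree

fun tsize :: "tree \<Rightarrow> nat" where
  "tsize (Lf _) = 1"
| "tsize (J l r) = 1 + tsize l + tsize r"

definition C :: "tree option \<Rightarrow> nat" where
  "C X = (case X of None \<Rightarrow> 0 | Some t \<Rightarrow> tsize t)"

fun tleaves :: "tree \<Rightarrow> lit list" where
  "tleaves (Lf a) = [a]"
| "tleaves (J l r) = tleaves l @ tleaves r"

definition leaf_list :: "tree option \<Rightarrow> lit list" where
  "leaf_list X = (case X of None \<Rightarrow> [] | Some t \<Rightarrow> tleaves t)"

definition lit_list :: "nat \<Rightarrow> lit list" where
  "lit_list n = concat (map (\<lambda>i. [(i, True), (i, False)]) [1..<Suc n])"

definition valid :: "nat \<Rightarrow> tree option \<Rightarrow> bool" where
  "valid n X \<longleftrightarrow> set (leaf_list X) \<subseteq> set (lit_list n)"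

definition MAJ :: "nat \<Rightarrow> tree option \<Rightarrow> nat" where
  "MAJ n X = card {i \<in> {1..n}.
      count_list (leaf_list X) (i, True) \<ge> 1 \<and>
      count_list (leaf_list X) (i, True) \<ge> count_list (leaf_list X) (i, False)}"

definition obj :: "nat \<Rightarrow> tree option \<Rightarrow> nat \<times> nat" where
  "obj n X = (MAJ n X, C X)"

definition wdom :: "nat \<Rightarrow> tree option \<Rightarrow> tree option \<Rightarrow> bool" where
  "wdom n Y X \<longleftrightarrow> MAJ n Y \<ge> MAJ n X \<and> C Y \<le> C X"

definition sdom :: "nat \<Rightarrow> tree option \<Rightarrow> tree option \<Rightarrow> bool" where
  "sdom n Y X \<longleftrightarrow> wdom n Y X \<and> (MAJ n Y > MAJ n X \<or> C Y < C X)"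

definition pareto_opt :: "nat \<Rightarrow> tree option \<Rightarrow> bool" where
  "pareto_opt n X \<longleftrightarrow> valid n X \<and> \<not> (\<exists>Y. valid n Y \<and> sdom n Y X)"

definition pareto_front :: "nat \<Rightarrow> (nat \<times> nat) set" where
  "pareto_front n = {obj n X | X. pareto_opt n X}"

definition unif_list :: "'a list \<Rightarrow> 'a pmf" where
  "unif_list xs = map_pmf (nth xs) (pmf_of_set {..<length xs})"

fun subst_all :: "tree \<Rightarrow> lit \<Rightarrow> tree list" where
  "subst_all (Lf _) u = [Lf u]"
| "subst_all (J l r) u = map (\<lambda>l'. J l' r) (subst_all l u) @ map (\<lambda>r'. J l r') (subst_all r u)"

definition mkJ :: "bool \<Rightarrow> lit \<Rightarrow> tree \<Rightarrow> tree" where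
  "mkJ b u v = (if b then J (Lf u) v else J v (Lf u))"

fun ins_all :: "tree \<Rightarrow> lit \<Rightarrow> bool \<Rightarrow> tree list" where
  "ins_all (Lf a) u b = [mkJ b u (Lf a)]"
| "ins_all (J l r) u b = mkJ b u (J l r) # map (\<lambda>l'. J l' r) (ins_all l u b)
      @ map (\<lambda>r'. J l r') (ins_all r u b)"

fun del_all :: "tree \<Rightarrow> tree option list" where
  "del_all (Lf _) = [None]"
| "del_all (J l r) =
     map (\<lambda>x. Some (case x of None \<Rightarrow> r | Some l' \<Rightarrow> J l' r)) (del_all l)
   @ map (\<lambda>x. Some (case x of None \<Rightarrow> l | Some r' \<Rightarrow> J l r')) (del_all r)"

definition substitute :: "nat \<Rightarrow> tree option \<Rightarrow> tree option pmf" where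
  "substitute n X = (case X of None \<Rightarrow> return_pmf None
     | Some t \<Rightarrow> bind_pmf (unif_list (lit_list n))
         (\<lambda>u. map_pmf Some (unif_list (subst_all t u))))"

definition insert_op :: "nat \<Rightarrow> tree option \<Rightarrow> tree option pmf" where
  "insert_op n X = (case X of None \<Rightarrow> map_pmf (\<lambda>u. Some (Lf u)) (unif_list (lit_list n))
     | Some t \<Rightarrow> bind_pmf (unif_list (lit_list n)) (\<lambda>u.
         bind_pmf (pmf_of_set (UNIV :: bool set)) (\<lambda>b.
           map_pmf Some (unif_list (ins_all t u b)))))"

definition delete_op :: "tree option \<Rightarrow> tree option pmf" where
  "delete_op X = (case X of None \<Rightarrow> return_pmf None
     | Some t \<Rightarrow> unif_list (del_all t))"

definition hvl :: "nat \<Rightarrow> tree option \<Rightarrow> tree option pmf" where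
  "hvl n X = bind_pmf (pmf_of_set {0::nat, 1, 2}) (\<lambda>op.
     if op = 0 then substitute n X else if op = 1 then insert_op n X else delete_op X)"

definition mut_single :: "nat \<Rightarrow> tree option \<Rightarrow> tree option pmf" where
  "mut_single n X = hvl n X"

definition mut_multi :: "nat \<Rightarrow> tree option \<Rightarrow> tree option pmf" where
  "mut_multi n X = bind_pmf (poisson_pmf 1) (\<lambda>k.
     ((\<lambda>D. bind_pmf D (hvl n)) ^^ Suc k) (return_pmf X))"

definition smo_step :: "nat \<Rightarrow> (tree option \<Rightarrow> tree option pmf) \<Rightarrow> tree option set
    \<Rightarrow> tree option set pmf" where
  "smo_step n mut P = bind_pmf (pmf_of_set P) (\<lambda>X. map_pmf (\<lambda>Y.
     if (\<exists>Z\<in>P. sdom n Z Y) then P else (P - {Z \<in> P. wdom n Y Z}) \<union> {Y}) (mut X))"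

definition covers_front :: "nat \<Rightarrow> tree option set \<Rightarrow> bool" where
  "covers_front n P \<longleftrightarrow> (\<forall>v \<in> pareto_front n. \<exists>X\<in>P. obj n X = v)"

definition stopped_dist :: "nat \<Rightarrow> (tree option \<Rightarrow> tree option pmf) \<Rightarrow> tree option
    \<Rightarrow> nat \<Rightarrow> tree option set pmf" where
  "stopped_dist n mut X0 t = ((\<lambda>D. bind_pmf D (\<lambda>P.
      if covers_front n P then return_pmf P else smo_step n mut P)) ^^ t) (return_pmf {X0})"

text \<open>Expected optimization time E[T] = sum over t of Pr[T > t].\<close>
definition opt_time :: "nat \<Rightarrow> (tree option \<Rightarrow> tree option pmf) \<Rightarrow> tree option \<Rightarrow> ennreal" where
  "opt_time n mut X0 = (\<Sum>t. ennreal (measure_pmf.prob (stopped_dist n mut X0 t)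
      {P. \<not> covers_front n P}))"

end

theory Submission
  imports Defs
begin

text \<open>
  Proof idea (drift analysis with a potential function on populations).
  Optimal trees have as many leaves as counted variables, so the Pareto front consists of the
  vectors \<open>(i, 2i - 1)\<close> for \<open>i \<le> n\<close>; such trees are never strictly dominated and,
  once present, are never lost. The run has two phases. While the empty tree is missing,
  deleting a leaf of a smallest tree (probability at least \<open>1/(9(n + 1))\<close>) lowers the minimal
  complexity, which takes \<open>O(n T\<^sub>i\<^sub>n\<^sub>i\<^sub>t)\<close> steps. Afterwards the population covers
  \<open>(0,0), \<dots>, (k, 2k - 1)\<close> for some level \<open>k\<close>, and inserting a missing positive literal into
  the tree for \<open>(k, 2k - 1)\<close> (probability at least \<open>(n - k)/(18n(n + 1))\<close>) raises the level;
  summing the reciprocals gives \<open>O(n\<^sup>2 log n)\<close>.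
\<close>

section \<open>Expected hitting times via a potential function\<close>

definition stopped :: "('s \<Rightarrow> bool) \<Rightarrow> ('s \<Rightarrow> 's pmf) \<Rightarrow> 's \<Rightarrow> 's pmf" where
  "stopped G K s = (if G s then return_pmf s else K s)"

text \<open>One step of the stopped chain: if \<open>h\<close> drops in expectation by at least 1 outside the
  goal, then the probability of not yet being in the goal is paid for by the decrease of the
  expected potential.\<close>

lemma stopped_step_potential:
  fixes K :: "'s \<Rightarrow> 's pmf" and h :: "'s \<Rightarrow> ennreal"
  assumes drift: "\<And>s. s \<in> set_pmf D \<Longrightarrow> \<not> G s \<Longrightarrow> 1 + (\<integral>\<^sup>+ x. h x \<partial>K s) \<le> h s"
  shows "ennreal (measure_pmf.prob D {s. \<not> G s}) + (\<integral>\<^sup>+ x. h x \<partial>bind_pmf D (stopped G K))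
           \<le> (\<integral>\<^sup>+ s. h s \<partial>D)"
proof -
  have "ennreal (measure_pmf.prob D {s. \<not> G s}) + (\<integral>\<^sup>+ x. h x \<partial>bind_pmf D (stopped G K))
      = (\<integral>\<^sup>+ s. indicator {s. \<not> G s} s + (\<integral>\<^sup>+ x. h x \<partial>stopped G K s) \<partial>D)"
    by (simp add: measure_pmf.emeasure_eq_measure[symmetric] nn_integral_add)
  also have "\<dots> \<le> (\<integral>\<^sup>+ s. h s \<partial>D)"
    by (intro nn_integral_mono_AE AE_pmfI)
       (auto simp: stopped_def nn_integral_return_pmf drift)
  finally show ?thesis .
qed

theorem stopped_chain_expected_time:
  fixes K :: "'s \<Rightarrow> 's pmf" and h :: "'s \<Rightarrow> ennreal"
  assumes init: "I s0"
    and invariant: "\<And>s s'. I s \<Longrightarrow> \<not> G s \<Longrightarrow> s' \<in> set_pmf (K s) \<Longrightarrow> I s'"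
    and drift: "\<And>s. I s \<Longrightarrow> \<not> G s \<Longrightarrow> 1 + (\<integral>\<^sup>+ x. h x \<partial>K s) \<le> h s"
  shows "(\<Sum>t. ennreal (measure_pmf.prob (((\<lambda>D. bind_pmf D (stopped G K)) ^^ t) (return_pmf s0))
            {s. \<not> G s})) \<le> h s0"
proof -
  define D where "D t = ((\<lambda>D. bind_pmf D (stopped G K)) ^^ t) (return_pmf s0)" for t
  have D_Suc: "D (Suc t) = bind_pmf (D t) (stopped G K)" for t
    by (simp add: D_def)
  have support: "I s" if "s \<in> set_pmf (D t)" for t s
    using that
  proof (induction t arbitrary: s)
    case 0
    then show ?case by (simp add: D_def init)
  next
    case (Suc t)
    then obtain s' where "s' \<in> set_pmf (D t)" "s \<in> set_pmf (stopped G K s')"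
      by (auto simp: D_Suc)
    then show ?case using Suc.IH invariant by (auto simp: stopped_def split: if_splits)
  qed
  have partial: "(\<Sum>u<t. ennreal (measure_pmf.prob (D u) {s. \<not> G s})) + (\<integral>\<^sup>+ x. h x \<partial>D t) \<le> h s0"
    for t
  proof (induction t)
    case 0
    then show ?case by (simp add: D_def nn_integral_return_pmf)
  next
    case (Suc t)
    have "(\<Sum>u<Suc t. ennreal (measure_pmf.prob (D u) {s. \<not> G s})) + (\<integral>\<^sup>+ x. h x \<partial>D (Suc t))
        = (\<Sum>u<t. ennreal (measure_pmf.prob (D u) {s. \<not> G s}))
          + (ennreal (measure_pmf.prob (D t) {s. \<not> G s}) + (\<integral>\<^sup>+ x. h x \<partial>D (Suc t)))"
      by (simp add: add.assoc)
    also have "\<dots> \<le> (\<Sum>u<t. ennreal (measure_pmf.prob (D u) {s. \<not> G s})) + (\<integral>\<^sup>+ x. h x \<partial>D t)"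
      unfolding D_Suc using support drift by (intro add_left_mono stopped_step_potential) blast
    also have "\<dots> \<le> h s0" by (rule Suc.IH)
    finally show ?case .
  qed
  have "(\<Sum>t. ennreal (measure_pmf.prob (D t) {s. \<not> G s})) \<le> h s0"
  proof (rule suminf_le_const)
    show "summable (\<lambda>t. ennreal (measure_pmf.prob (D t) {s. \<not> G s}))" by simp
    show "(\<Sum>u<t. ennreal (measure_pmf.prob (D u) {s. \<not> G s})) \<le> h s0" for t
      using partial[of t] by (meson add_increasing2 order_trans zero_le le_iff_add)
  qed
  then show ?thesis by (simp add: D_def)
qed

lemma measure_bind_pmf_ge:
  assumes "\<And>x. x \<in> A \<Longrightarrow> x \<in> set_pmf M \<Longrightarrow> q \<le> measure_pmf.prob (f x) E" and "0 \<le> q"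
  shows "measure_pmf.prob M A * q \<le> measure_pmf.prob (bind_pmf M f) E"
proof -
  have "measure_pmf.prob M A * q = (\<integral>x. indicator A x * q \<partial>M)" by simp
  also have "\<dots> \<le> (\<integral>x. measure_pmf.prob (f x) E \<partial>M)"
  proof (rule integral_mono_AE)
    show "integrable (measure_pmf M) (\<lambda>x. indicator A x * q)"
      by (rule measure_pmf.integrable_const_bound[where B = "\<bar>q\<bar>"]) (auto simp: indicator_def)
    show "integrable (measure_pmf M) (\<lambda>x. measure_pmf.prob (f x) E)"
      by (rule measure_pmf.integrable_const_bound[where B = 1]) auto
    show "AE x in measure_pmf M. indicator A x * q \<le> measure_pmf.prob (f x) E"
      using assms by (auto intro!: AE_pmfI simp: indicator_def)
  qed
  also have "\<dots> = measure_pmf.prob (bind_pmf M f) E"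
    unfolding measure_pmf_bind
    by (subst measure_pmf.measure_bind[where N = "count_space UNIV"])
       (auto simp: space_subprob_algebra measure_pmf_in_subprob_algebra
         intro: prob_space_imp_subprob_space measure_pmf.prob_space_axioms)
  finally show ?thesis .
qed

lemma expected_potential_drop:
  fixes f :: "'a \<Rightarrow> real"
  assumes bounds: "\<And>x. x \<in> set_pmf M \<Longrightarrow> 0 \<le> f x \<and> f x \<le> c"
    and drop: "\<And>x. x \<in> set_pmf M \<Longrightarrow> x \<in> E \<Longrightarrow> f x \<le> c - d"
    and d: "0 \<le> d" and progress: "1 \<le> d * measure_pmf.prob M E"
  shows "1 + (\<integral>\<^sup>+ x. ennreal (f x) \<partial>M) \<le> ennreal c"
proof -
  have "ennreal 1 \<le> ennreal (d * measure_pmf.prob M E)"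
    using progress by (rule ennreal_leI)
  also have "\<dots> = ennreal d * emeasure M E"
    using d by (simp add: ennreal_mult measure_pmf.emeasure_eq_measure)
  finally have "1 + (\<integral>\<^sup>+ x. ennreal (f x) \<partial>M) \<le> ennreal d * emeasure M E + (\<integral>\<^sup>+ x. ennreal (f x) \<partial>M)"
    by (intro add_right_mono) simp
  also have "\<dots> = (\<integral>\<^sup>+ x. ennreal d * indicator E x + ennreal (f x) \<partial>M)"
    by (simp add: nn_integral_add nn_integral_cmult_indicator)
  also have "\<dots> \<le> (\<integral>\<^sup>+ x. ennreal c \<partial>M)"
  proof (intro nn_integral_mono_AE AE_pmfI)
    fix x assume x: "x \<in> set_pmf M"
    show "ennreal d * indicator E x + ennreal (f x) \<le> ennreal c"
    proof (cases "x \<in> E")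
      case True
      have "ennreal d + ennreal (f x) = ennreal (d + f x)"
        using bounds[OF x] d by (simp only: ennreal_plus)
      also have "\<dots> \<le> ennreal c"
        using drop[OF x True] by (intro ennreal_leI) simp
      finally show ?thesis using True by simp
    next
      case False
      then show ?thesis using bounds[OF x] by (simp add: ennreal_leI)
    qed
  qed
  also have "\<dots> = ennreal c" by simp
  finally show ?thesis .
qed

section \<open>Syntax trees and the objectives\<close>

lemma tleaves_nonempty: "tleaves t \<noteq> []"
  by (induction t) auto

text \<open>A binary tree with \<open>l\<close> leaves has \<open>2l - 1\<close> nodes; this also holds for the empty
  tree, so the complexity is a function of the number of leaves.\<close>

lemma tsize_tleaves: "tsize t = 2 * length (tleaves t) - 1"
proof (induction t)
  case (J l r)
  have "length (tleaves l) \<noteq> 0" "length (tleaves r) \<noteq> 0"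
    using tleaves_nonempty by auto
  with J.IH show ?case by (simp only: tsize.simps tleaves.simps length_append) arith
qed simp

lemma C_leaf_list: "C X = 2 * length (leaf_list X) - 1"
  by (cases X) (simp_all add: C_def leaf_list_def tsize_tleaves)

lemma leaf_list_surj: "\<exists>X. leaf_list X = xs"
proof (induction xs)
  case Nil
  show ?case by (rule exI[of _ None]) (simp add: leaf_list_def)
next
  case (Cons a xs)
  then obtain X where X: "leaf_list X = xs" by blast
  show ?case
  proof (cases X)
    case None
    then show ?thesis using X by (intro exI[of _ "Some (Lf a)"]) (simp add: leaf_list_def)
  next
    case (Some t)
    then show ?thesis using X by (intro exI[of _ "Some (J (Lf a) t)"]) (simp add: leaf_list_def)
  qed
qed

definition maj_set :: "nat \<Rightarrow> lit list \<Rightarrow> nat set" where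
  "maj_set n l = {i \<in> {1..n}. 1 \<le> count_list l (i, True) \<and>
                                count_list l (i, False) \<le> count_list l (i, True)}"

lemma MAJ_maj_set: "MAJ n X = card (maj_set n (leaf_list X))"
  by (simp add: MAJ_def maj_set_def)

lemma maj_set_subset: "maj_set n l \<subseteq> {1..n}"
  by (auto simp: maj_set_def)

lemma finite_maj_set [simp]: "finite (maj_set n l)"
  using finite_subset[OF maj_set_subset] by blast

lemma maj_set_lits: "(\<lambda>i. (i, True)) ` maj_set n l \<subseteq> set l"
proof
  fix x assume "x \<in> (\<lambda>i. (i, True)) ` maj_set n l"
  then obtain i where "x = (i, True)" "1 \<le> count_list l (i, True)" by (auto simp: maj_set_def)
  then show "x \<in> set l" using count_notin[of x l] by fastforce
qed

lemma card_maj_set: "card (maj_set n l) = card ((\<lambda>i. (i, True)) ` maj_set n l)"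
  by (simp add: card_image inj_on_def)

lemma MAJ_le_n: "MAJ n X \<le> n"
  using card_mono[OF _ maj_set_subset] by (simp add: MAJ_maj_set)

text \<open>Each counted variable contributes a distinct positive leaf.\<close>

lemma MAJ_le_length: "MAJ n X \<le> length (leaf_list X)"
proof -
  have "MAJ n X \<le> card (set (leaf_list X))"
    unfolding MAJ_maj_set card_maj_set by (rule card_mono[OF _ maj_set_lits]) simp
  also have "\<dots> \<le> length (leaf_list X)" by (rule card_length)
  finally show ?thesis .
qed

text \<open>The objective vector \<open>(k, 2k - 1)\<close>: MAJORITY \<open>k\<close> with the fewest possible nodes.
  Every point of the Pareto front has this form.\<close>

definition opt_obj :: "nat \<Rightarrow> nat \<times> nat" where
  "opt_obj k = (k, 2 * k - 1)"

lemma obj_opt_obj_iff: "obj n X = opt_obj k \<longleftrightarrow> MAJ n X = k \<and> length (leaf_list X) = k"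
  by (auto simp: obj_def opt_obj_def C_leaf_list)

lemma wdom_opt_obj:
  assumes "wdom n Y Z" and "obj n Z = opt_obj k"
  shows "obj n Y = opt_obj k"
proof -
  have "k \<le> MAJ n Y" and "2 * length (leaf_list Y) - 1 \<le> 2 * k - 1"
    using assms by (auto simp: wdom_def obj_opt_obj_iff C_leaf_list[of Y] C_leaf_list[of Z])
  then show ?thesis using MAJ_le_length[of n Y] by (auto simp: obj_opt_obj_iff)
qed

lemma opt_obj_not_sdom: "obj n Y = opt_obj k \<Longrightarrow> \<not> sdom n Z Y"
  using wdom_opt_obj[of n Z Y k] by (auto simp: sdom_def obj_def opt_obj_def)

lemma set_lit_list: "set (lit_list n) = {1..n} \<times> UNIV"
  by (auto simp: lit_list_def)

text \<open>The tree with leaves \<open>x\<^sub>1, \<dots>, x\<^sub>i\<close> witnesses the vector \<open>(i, 2i - 1)\<close>.\<close>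

lemma opt_tree_exists:
  assumes "i \<le> n"
  shows "\<exists>W. valid n W \<and> obj n W = opt_obj i"
proof -
  define xs where "xs = map (\<lambda>j. (j, True)) [1..<Suc i]"
  obtain W where W: "leaf_list W = xs" using leaf_list_surj by blast
  have "{1..i} \<subseteq> maj_set n xs"
  proof
    fix j assume j: "j \<in> {1..i}"
    have "(j, True) \<in> set xs" and "(j, False) \<notin> set xs" using j by (auto simp: xs_def)
    then show "j \<in> maj_set n xs"
      using j assms by (auto simp: maj_set_def Suc_le_eq) (metis count_list_0_iff gr0I)
  qed
  then have "i \<le> MAJ n W"
    unfolding MAJ_maj_set W by (metis card_atLeastAtMost card_mono diff_Suc_1 finite_maj_set)
  moreover have len: "length xs = i" by (simp del: upt_Suc add: xs_def)
  ultimately have MAJ: "MAJ n W = i" using MAJ_le_length[of n W] W by simp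
  have "set xs \<subseteq> set (lit_list n)" using assms by (auto simp: xs_def set_lit_list)
  then have "valid n W" by (simp add: valid_def W)
  moreover have "obj n W = opt_obj i" by (simp add: obj_opt_obj_iff MAJ W len)
  ultimately show ?thesis by blast
qed

lemma pareto_front_opt_obj:
  assumes "v \<in> pareto_front n"
  shows "\<exists>i\<le>n. v = opt_obj i"
proof -
  obtain X where X: "pareto_opt n X" "v = obj n X" using assms by (auto simp: pareto_front_def)
  define i where "i = MAJ n X"
  obtain W where W: "valid n W" "obj n W = opt_obj i"
    using opt_tree_exists[OF MAJ_le_n] i_def by blast
  have "\<not> sdom n W X" using X(1) W(1) by (auto simp: pareto_opt_def)
  then have "C X \<le> 2 * i - 1"
    using W(2) by (auto simp: sdom_def wdom_def obj_def opt_obj_def i_def)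
  moreover have "2 * i - 1 \<le> C X"
    using MAJ_le_length[of n X] by (simp add: C_leaf_list i_def)
  ultimately show ?thesis using MAJ_le_n[of n X] by (auto simp: X(2) obj_def opt_obj_def i_def)
qed

section \<open>The population of SMO-GP\<close>

definition covers_upto :: "nat \<Rightarrow> nat \<Rightarrow> tree option set \<Rightarrow> bool" where
  "covers_upto n j P \<longleftrightarrow> (\<forall>i\<le>j. \<exists>Z\<in>P. obj n Z = opt_obj i)"

lemma covers_upto_front: "covers_upto n n P \<Longrightarrow> covers_front n P"
  using pareto_front_opt_obj by (fastforce simp: covers_front_def covers_upto_def)

lemma obj_opt_obj_0: "obj n Z = opt_obj 0 \<longleftrightarrow> Z = None"
  using MAJ_le_length[of n Z] by (cases Z) (auto simp: obj_opt_obj_iff leaf_list_def tleaves_nonempty)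

lemma covers_upto_0: "covers_upto n 0 P \<longleftrightarrow> None \<in> P"
  by (simp add: covers_upto_def obj_opt_obj_0)

definition accept :: "nat \<Rightarrow> tree option set \<Rightarrow> tree option \<Rightarrow> tree option set" where
  "accept n P Y = (if \<exists>Z\<in>P. sdom n Z Y then P else (P - {Z \<in> P. wdom n Y Z}) \<union> {Y})"

lemma smo_step_accept:
  "smo_step n mut P = bind_pmf (pmf_of_set P) (\<lambda>X. map_pmf (accept n P) (mut X))"
  unfolding smo_step_def accept_def ..

lemma accept_keeps: "Z \<in> P \<Longrightarrow> \<exists>Z'\<in>accept n P Y. wdom n Z' Z"
  by (auto simp: accept_def wdom_def)

lemma accept_new: "\<not> (\<exists>Z\<in>P. sdom n Z Y) \<Longrightarrow> Y \<in> accept n P Y"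
  by (simp add: accept_def)

definition pop_inv :: "nat \<Rightarrow> tree option set \<Rightarrow> bool" where
  "pop_inv n P \<longleftrightarrow> finite P \<and> P \<noteq> {} \<and> (\<forall>Z\<in>P. valid n Z) \<and>
      (\<forall>Z1\<in>P. \<forall>Z2\<in>P. Z1 \<noteq> Z2 \<longrightarrow> \<not> wdom n Z1 Z2)"

lemma pop_inv_accept:
  assumes "pop_inv n P" and "valid n Y"
  shows "pop_inv n (accept n P Y)"
proof (cases "\<exists>Z\<in>P. sdom n Z Y")
  case False
  have "\<not> wdom n Z Y" if "Z \<in> P" and "\<not> wdom n Y Z" for Z
    using False that by (auto simp: sdom_def wdom_def)
  then show ?thesis using assms False by (auto simp: pop_inv_def accept_def)
qed (use assms in \<open>simp add: accept_def\<close>)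

text \<open>Incomparable trees have distinct MAJORITY values, so the population has at most \<open>n + 1\<close>
  members; this bounds the cost of selecting a particular parent.\<close>

lemma pop_inv_card:
  assumes "pop_inv n P"
  shows "card P \<le> n + 1"
proof -
  have "inj_on (MAJ n) P"
  proof (rule inj_onI)
    fix Z1 Z2 assume "Z1 \<in> P" "Z2 \<in> P" "MAJ n Z1 = MAJ n Z2"
    then show "Z1 = Z2" using assms nat_le_linear[of "C Z1" "C Z2"]
      by (auto simp: pop_inv_def wdom_def)
  qed
  then have "card P = card (MAJ n ` P)" by (simp add: card_image)
  also have "\<dots> \<le> card {0..n}" by (rule card_mono) (auto simp: MAJ_le_n)
  finally show ?thesis by simp
qed

lemma covers_upto_accept: "covers_upto n j P \<Longrightarrow> covers_upto n j (accept n P Y)"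
  unfolding covers_upto_def by (metis accept_keeps wdom_opt_obj)

lemma covers_upto_Suc_accept:
  assumes "covers_upto n k P" and "obj n Y = opt_obj (Suc k)"
  shows "covers_upto n (Suc k) (accept n P Y)"
proof -
  have "Y \<in> accept n P Y" using opt_obj_not_sdom[OF assms(2)] by (blast intro: accept_new)
  then show ?thesis
    using covers_upto_accept[OF assms(1)] assms(2) by (auto simp: covers_upto_def le_Suc_eq)
qed

lemma accept_smaller:
  assumes "finite P" and "C Y < Min (C ` P)"
  shows "Y \<in> accept n P Y"
proof (rule accept_new)
  have "C Y < C Z" if "Z \<in> P" for Z
    using assms that by (meson Min_le finite_imageI imageI order_less_le_trans)
  then show "\<not> (\<exists>Z\<in>P. sdom n Z Y)" by (fastforce simp: sdom_def wdom_def)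
qed

section \<open>The mutation operators\<close>

lemma set_pmf_unif_list:
  assumes "xs \<noteq> []"
  shows "set_pmf (unif_list xs) = set xs"
proof -
  have "set_pmf (pmf_of_set {..<length xs}) = {..<length xs}"
    using assms by (subst set_pmf_of_set) auto
  then show ?thesis by (auto simp: unif_list_def set_conv_nth)
qed

lemma measure_unif_list:
  assumes "distinct xs" and "xs \<noteq> []"
  shows "measure_pmf.prob (unif_list xs) A = card (set xs \<inter> A) / length xs"
proof -
  have "measure_pmf.prob (unif_list xs) A = card ({..<length xs} \<inter> nth xs -` A) / length xs"
    using assms unfolding unif_list_def measure_map_pmf by (subst measure_pmf_of_set) auto
  also have "card ({..<length xs} \<inter> nth xs -` A) = card (nth xs ` ({..<length xs} \<inter> nth xs -` A))"
    using assms(1) by (intro card_image[symmetric] inj_on_nth) auto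
  also have "nth xs ` ({..<length xs} \<inter> nth xs -` A) = set xs \<inter> A"
    by (auto simp: set_conv_nth)
  finally show ?thesis .
qed

lemma distinct_lit_list: "distinct (lit_list n)"
  unfolding lit_list_def by (induction n) (auto simp: distinct_append)

lemma length_lit_list: "length (lit_list n) = 2 * n"
  unfolding lit_list_def by (induction n) auto

lemma lit_list_nonempty: "n \<ge> 1 \<Longrightarrow> lit_list n \<noteq> []"
  using length_lit_list[of n] by auto

lemma ins_all_leaves:
  "t' \<in> set (ins_all t u b) \<Longrightarrow> mset (tleaves t') = add_mset u (mset (tleaves t))"
  by (induction t arbitrary: t') (auto simp: mkJ_def)

lemma subst_all_leaves: "t' \<in> set (subst_all t u) \<Longrightarrow> set (tleaves t') \<subseteq> insert u (set (tleaves t))"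
  by (induction t arbitrary: t') (auto; blast)+

lemma del_all_shrinks:
  "Y \<in> set (del_all t) \<Longrightarrow> C Y < tsize t \<and> set (leaf_list Y) \<subseteq> set (tleaves t)"
  by (induction t arbitrary: Y) (fastforce simp: C_def leaf_list_def split: option.splits)+

lemma ins_all_nonempty: "ins_all t u b \<noteq> []"
  by (cases t) auto

lemma subst_all_nonempty: "subst_all t u \<noteq> []"
  by (induction t) auto

lemma del_all_nonempty: "del_all t \<noteq> []"
  by (induction t) auto

lemma insert_op_bind:
  "\<exists>F. insert_op n X = bind_pmf (unif_list (lit_list n)) F \<and>
       (\<forall>u. \<forall>Y\<in>set_pmf (F u). mset (leaf_list Y) = add_mset u (mset (leaf_list X)))"
proof (cases X)
  case None
  then show ?thesis
    by (intro exI[of _ "\<lambda>u. return_pmf (Some (Lf u))"])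
       (simp add: insert_op_def map_pmf_def leaf_list_def)
next
  case (Some t)
  then show ?thesis
    by (intro exI[of _ "\<lambda>u. bind_pmf (pmf_of_set UNIV) (\<lambda>b. map_pmf Some (unif_list (ins_all t u b)))"])
       (auto simp: insert_op_def leaf_list_def set_pmf_unif_list ins_all_nonempty ins_all_leaves)
qed

lemma insert_op_leaves:
  assumes "n \<ge> 1" and "Y \<in> set_pmf (insert_op n X)"
  shows "set (leaf_list Y) \<subseteq> set (lit_list n) \<union> set (leaf_list X)"
proof -
  obtain F where F: "insert_op n X = bind_pmf (unif_list (lit_list n)) F"
    "\<And>u Y. Y \<in> set_pmf (F u) \<Longrightarrow> mset (leaf_list Y) = add_mset u (mset (leaf_list X))"
    using insert_op_bind by blast
  from assms(2) obtain u where u: "u \<in> set_pmf (unif_list (lit_list n))" and "Y \<in> set_pmf (F u)"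
    unfolding F(1) by auto
  then have "set_mset (mset (leaf_list Y)) = insert u (set (leaf_list X))"
    using F(2) by simp
  then show ?thesis
    using u by (simp add: set_pmf_unif_list lit_list_nonempty[OF assms(1)])
qed

lemma substitute_leaves:
  assumes "n \<ge> 1" and "Y \<in> set_pmf (substitute n X)"
  shows "set (leaf_list Y) \<subseteq> set (lit_list n) \<union> set (leaf_list X)"
  using assms subst_all_leaves
  by (fastforce simp: substitute_def leaf_list_def set_pmf_unif_list lit_list_nonempty
      subst_all_nonempty split: option.splits)

lemma delete_op_leaves: "Y \<in> set_pmf (delete_op X) \<Longrightarrow> set (leaf_list Y) \<subseteq> set (leaf_list X)"
  using del_all_shrinks
  by (fastforce simp: delete_op_def leaf_list_def set_pmf_unif_list del_all_nonempty
      split: option.splits)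

lemma hvl_valid:
  assumes "n \<ge> 1" and "valid n X" and "Y \<in> set_pmf (hvl n X)"
  shows "valid n Y"
  using assms substitute_leaves[OF assms(1)] insert_op_leaves[OF assms(1)] delete_op_leaves
  by (fastforce simp: hvl_def valid_def split: if_splits)

lemma hvl_branch_prob:
  fixes op :: nat
  assumes "op \<in> {0, 1, 2}"
  shows "measure_pmf.prob (if op = 0 then substitute n X else if op = 1 then insert_op n X
           else delete_op X) E / 3 \<le> measure_pmf.prob (hvl n X) E"
proof -
  have third: "measure_pmf.prob (pmf_of_set {0::nat, 1, 2}) {op} = 1 / 3"
    using assms by (auto simp: measure_pmf_of_set)
  have "measure_pmf.prob (pmf_of_set {0::nat, 1, 2}) {op} *
      measure_pmf.prob (if op = 0 then substitute n X else if op = 1 then insert_op n X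
        else delete_op X) E \<le> measure_pmf.prob (hvl n X) E"
    unfolding hvl_def by (rule measure_bind_pmf_ge) auto
  then show ?thesis unfolding third by linarith
qed

lemma hvl_insert_prob: "measure_pmf.prob (insert_op n X) E / 3 \<le> measure_pmf.prob (hvl n X) E"
  using hvl_branch_prob[of 1] by simp

lemma hvl_delete_prob: "measure_pmf.prob (delete_op X) E / 3 \<le> measure_pmf.prob (hvl n X) E"
  using hvl_branch_prob[of 2] by simp

text \<open>Both single- and multi-operation mutation
  qualify; for the latter, \<open>Pois(1) = 0\<close> has probability \<open>e\<^sup>-\<^sup>1 \<ge> 1/3\<close>.\<close>

definition admissible_mutation :: "nat \<Rightarrow> (tree option \<Rightarrow> tree option pmf) \<Rightarrow> bool" where
  "admissible_mutation n mut \<longleftrightarrow>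
     (\<forall>X E. measure_pmf.prob (hvl n X) E / 3 \<le> measure_pmf.prob (mut X) E) \<and>
     (\<forall>X Y. valid n X \<longrightarrow> Y \<in> set_pmf (mut X) \<longrightarrow> valid n Y)"

lemma admissible_mut_single: "n \<ge> 1 \<Longrightarrow> admissible_mutation n (mut_single n)"
  by (auto simp: admissible_mutation_def mut_single_def hvl_valid)

lemma admissible_mut_multi:
  assumes n: "n \<ge> 1"
  shows "admissible_mutation n (mut_multi n)"
  unfolding admissible_mutation_def
proof (intro conjI allI impI)
  fix X E
  have "inverse (3::real) \<le> inverse (exp 1)"
    using exp_le by (intro le_imp_inverse_le) auto
  then have third: "(1::real) / 3 \<le> exp (- 1)"
    unfolding exp_minus by (simp only: inverse_eq_divide)
  have "measure_pmf.prob (hvl n X) E / 3 \<le> exp (- 1) * measure_pmf.prob (hvl n X) E"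
    using mult_right_mono[OF third measure_nonneg[of "measure_pmf (hvl n X)" E]] by simp
  also have "\<dots> = measure_pmf.prob (poisson_pmf 1) {0} * measure_pmf.prob (hvl n X) E"
    by (simp add: measure_pmf_single)
  also have "\<dots> \<le> measure_pmf.prob (mut_multi n X) E"
    unfolding mut_multi_def by (rule measure_bind_pmf_ge) (auto simp: bind_return_pmf)
  finally show "measure_pmf.prob (hvl n X) E / 3 \<le> measure_pmf.prob (mut_multi n X) E" .
next
  fix X Y assume X: "valid n X" and Y: "Y \<in> set_pmf (mut_multi n X)"
  have "valid n Z" if "Z \<in> set_pmf (((\<lambda>D. bind_pmf D (hvl n)) ^^ k) (return_pmf X))" for k Z
    using that by (induction k arbitrary: Z) (auto simp: X dest: hvl_valid[OF n])
  moreover obtain k where "Y \<in> set_pmf (((\<lambda>D. bind_pmf D (hvl n)) ^^ Suc k) (return_pmf X))"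
    using Y unfolding mut_multi_def set_bind_pmf by blast
  ultimately show "valid n Y" by blast
qed

lemma maj_set_add_fresh:
  assumes "i \<in> {1..n}" and "(i, True) \<notin> set l" and "(i, False) \<notin> set l"
    and l': "mset l' = add_mset (i, True) (mset l)"
  shows "maj_set n l' = insert i (maj_set n l)"
proof -
  have "count_list l' x = count_list l x + (if x = (i, True) then 1 else 0)" for x
    using arg_cong[OF l', of "\<lambda>M. count M x"] by (simp add: count_mset)
  then show ?thesis using assms(1-3) by (auto simp: maj_set_def)
qed

lemma opt_tree_leaves:
  assumes "obj n Z = opt_obj k"
  shows "set (leaf_list Z) = (\<lambda>i. (i, True)) ` maj_set n (leaf_list Z)"
proof (rule card_subset_eq[symmetric, OF _ maj_set_lits])
  have "card (set (leaf_list Z)) \<le> k"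
    using card_length[of "leaf_list Z"] assms by (simp add: obj_opt_obj_iff)
  moreover have "card ((\<lambda>i. (i, True)) ` maj_set n (leaf_list Z)) = k"
    using assms by (simp add: obj_opt_obj_iff MAJ_maj_set card_maj_set)
  moreover have "card ((\<lambda>i. (i, True)) ` maj_set n (leaf_list Z)) \<le> card (set (leaf_list Z))"
    by (rule card_mono[OF _ maj_set_lits]) simp
  ultimately show "card ((\<lambda>i. (i, True)) ` maj_set n (leaf_list Z)) = card (set (leaf_list Z))"
    by linarith
qed simp

lemma obj_insert_fresh:
  assumes Z: "obj n Z = opt_obj k" and i: "i \<in> {1..n} - maj_set n (leaf_list Z)"
    and Y: "mset (leaf_list Y) = add_mset (i, True) (mset (leaf_list Z))"
  shows "obj n Y = opt_obj (Suc k)"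
proof -
  have fresh: "(i, b) \<notin> set (leaf_list Z)" for b
    using opt_tree_leaves[OF Z] i by auto
  have "maj_set n (leaf_list Y) = insert i (maj_set n (leaf_list Z))"
    using i fresh by (intro maj_set_add_fresh[OF _ _ _ Y]) auto
  then have "MAJ n Y = Suc k" using i Z by (simp add: MAJ_maj_set obj_opt_obj_iff)
  moreover have "length (leaf_list Y) = Suc k"
    using arg_cong[OF Y, of size] Z by (simp add: obj_opt_obj_iff)
  ultimately show ?thesis by (simp add: obj_opt_obj_iff)
qed

lemma insert_op_prob_ge:
  assumes n: "n \<ge> 1"
    and S: "\<And>u Y. u \<in> U \<Longrightarrow> mset (leaf_list Y) = add_mset u (mset (leaf_list X)) \<Longrightarrow> Y \<in> S"
  shows "measure_pmf.prob (unif_list (lit_list n)) U \<le> measure_pmf.prob (insert_op n X) S"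
proof -
  obtain F where F: "insert_op n X = bind_pmf (unif_list (lit_list n)) F"
    "\<And>u Y. Y \<in> set_pmf (F u) \<Longrightarrow> mset (leaf_list Y) = add_mset u (mset (leaf_list X))"
    using insert_op_bind by blast
  have "measure_pmf.prob (F u) S = 1" if "u \<in> U" for u
    using S[OF that F(2)] by (auto simp: measure_pmf.prob_eq_1 AE_measure_pmf_iff)
  then have "measure_pmf.prob (unif_list (lit_list n)) U * 1 \<le> measure_pmf.prob (insert_op n X) S"
    unfolding F(1) by (intro measure_bind_pmf_ge) auto
  then show ?thesis by simp
qed

text \<open>Progress by insertion: \<open>n - k\<close> of the \<open>2n\<close> literals produce the vector
  \<open>(k + 1, 2k + 1)\<close> from a tree with vector \<open>(k, 2k - 1)\<close>.\<close>

lemma insert_op_success: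
  assumes n: "n \<ge> 1" and Z: "obj n Z = opt_obj k"
  shows "real (n - k) / real (2 * n) \<le> measure_pmf.prob (insert_op n Z) {Y. obj n Y = opt_obj (Suc k)}"
proof -
  define M where "M = maj_set n (leaf_list Z)"
  define U where "U = (\<lambda>i. (i, True)) ` ({1..n} - M)"
  have "card U = card ({1..n} - M)" unfolding U_def by (rule card_image) (simp add: inj_on_def)
  also have "\<dots> = card {1..n} - card M"
    unfolding M_def by (rule card_Diff_subset[OF finite_maj_set maj_set_subset])
  also have "\<dots> = n - k"
    using Z by (simp add: M_def MAJ_maj_set obj_opt_obj_iff)
  finally have pU: "measure_pmf.prob (unif_list (lit_list n)) U = real (n - k) / real (2 * n)"
    using lit_list_nonempty[OF n]
    by (simp add: measure_unif_list distinct_lit_list length_lit_list set_lit_list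
        Int_absorb1 U_def image_subset_iff)
  have "measure_pmf.prob (unif_list (lit_list n)) U
      \<le> measure_pmf.prob (insert_op n Z) {Y. obj n Y = opt_obj (Suc k)}"
    by (rule insert_op_prob_ge[OF n]) (auto simp: U_def M_def intro: obj_insert_fresh[OF Z])
  then show ?thesis by (simp only: pU)
qed

lemma delete_op_shrinks: "set_pmf (delete_op (Some t)) \<subseteq> {Y. C Y < tsize t}"
  using del_all_shrinks by (auto simp: delete_op_def set_pmf_unif_list del_all_nonempty)

lemma smo_step_support:
  assumes mut: "admissible_mutation n mut" and inv: "pop_inv n P"
    and P': "P' \<in> set_pmf (smo_step n mut P)"
  obtains Y where "P' = accept n P Y" and "pop_inv n P'"
proof -
  obtain X Y where "X \<in> P" "Y \<in> set_pmf (mut X)" "P' = accept n P Y"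
    using P' inv by (auto simp: smo_step_accept pop_inv_def)
  moreover from this have "valid n Y"
    using mut inv by (auto simp: admissible_mutation_def pop_inv_def)
  ultimately show ?thesis using that pop_inv_accept[OF inv] by blast
qed

text \<open>Selecting a particular parent \<open>X\<close> costs a factor \<open>1/(n + 1)\<close>, and an admissible
  mutation performs a given HVL-Prime step with a further factor \<open>1/3\<close>.\<close>

lemma smo_step_prob_ge:
  assumes mut: "admissible_mutation n mut" and inv: "pop_inv n P" and X: "X \<in> P"
    and S: "\<And>Y. Y \<in> S \<Longrightarrow> accept n P Y \<in> E"
  shows "measure_pmf.prob (hvl n X) S / (3 * (real n + 1)) \<le> measure_pmf.prob (smo_step n mut P) E"
proof -
  have P: "finite P" "P \<noteq> {}" using inv by (auto simp: pop_inv_def)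
  have "measure_pmf.prob (hvl n X) S / 3 \<le> measure_pmf.prob (mut X) S"
    using mut unfolding admissible_mutation_def by blast
  then have "measure_pmf.prob (hvl n X) S / 3 / (real n + 1)
      \<le> measure_pmf.prob (mut X) S / (real n + 1)"
    by (rule divide_right_mono) simp
  then have "measure_pmf.prob (hvl n X) S / (3 * (real n + 1))
      \<le> measure_pmf.prob (mut X) S / (real n + 1)"
    by (simp only: divide_divide_eq_left)
  also have "\<dots> \<le> measure_pmf.prob (mut X) {Y. accept n P Y \<in> E} / real (card P)"
  proof (rule frac_le)
    show "measure_pmf.prob (mut X) S \<le> measure_pmf.prob (mut X) {Y. accept n P Y \<in> E}"
      using S by (intro measure_pmf.finite_measure_mono) auto
    show "real (card P) \<le> real n + 1" using pop_inv_card[OF inv] by simp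
  qed (use P in \<open>auto simp: card_gt_0_iff\<close>)
  also have "\<dots> = measure_pmf.prob (pmf_of_set P) {X} *
      measure_pmf.prob (map_pmf (accept n P) (mut X)) E"
    using P X by (simp add: measure_pmf_of_set vimage_def)
  also have "\<dots> \<le> measure_pmf.prob (smo_step n mut P) E"
    unfolding smo_step_accept by (rule measure_bind_pmf_ge) auto
  finally show ?thesis .
qed

section \<open>The potential function\<close>

text \<open>Phase 1 (no empty tree yet) costs \<open>9(n + 1)\<close> per node of the smallest tree, since a
  deletion from it succeeds with probability at least \<open>1/(9(n + 1))\<close>. Phase 2 moves through the
  levels \<open>j = 0, \<dots>, n - 1\<close> of covered optimal vectors; leaving level \<open>j\<close> succeeds with
  probability at least \<open>(n - j)/(18n(n + 1))\<close>, whose reciprocal is the weight of level \<open>j\<close>.\<close>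

definition level_weight :: "nat \<Rightarrow> nat \<Rightarrow> real" where
  "level_weight n j = 18 * real n * (real n + 1) / (real n - real j)"

definition level :: "nat \<Rightarrow> tree option set \<Rightarrow> nat" where
  "level n P = Max {j. j \<le> n \<and> covers_upto n j P}"

definition level_potential :: "nat \<Rightarrow> tree option set \<Rightarrow> real" where
  "level_potential n P = (\<Sum>j\<in>{level n P..<n}. level_weight n j)"

definition max_level_potential :: "nat \<Rightarrow> real" where
  "max_level_potential n = (\<Sum>j<n. level_weight n j)"

definition potential :: "nat \<Rightarrow> tree option set \<Rightarrow> real" where
  "potential n P = (if None \<in> P then level_potential n P
                    else 9 * (real n + 1) * real (Min (C ` P)) + max_level_potential n)"

lemma level_weight_pos: "j < n \<Longrightarrow> 0 < level_weight n j"
  by (simp add: level_weight_def)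

lemma level_covers:
  assumes "None \<in> P"
  shows "covers_upto n (level n P) P" and "level n P \<le> n"
proof -
  have "level n P \<in> {j. j \<le> n \<and> covers_upto n j P}"
    unfolding level_def using assms by (intro Max_in) (auto simp: covers_upto_0)
  then show "covers_upto n (level n P) P" and "level n P \<le> n" by auto
qed

lemma level_ge: "covers_upto n j P \<Longrightarrow> j \<le> n \<Longrightarrow> j \<le> level n P"
  unfolding level_def by (rule Max_ge) auto

lemma level_potential_le:
  assumes "covers_upto n j P" and "j \<le> n"
  shows "level_potential n P \<le> (\<Sum>i\<in>{j..<n}. level_weight n i)"
  unfolding level_potential_def using level_ge[OF assms]
  by (intro sum_mono2) (auto simp: less_imp_le level_weight_pos)

lemma level_potential_bounds: "0 \<le> level_potential n P \<and> level_potential n P \<le> max_level_potential n"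
  unfolding level_potential_def max_level_potential_def
  by (auto intro!: sum_nonneg sum_mono2 simp: less_imp_le level_weight_pos)

lemma potential_le_C:
  assumes "finite P" and "Z \<in> P" and "real (C Z) \<le> b"
  shows "potential n P \<le> 9 * (real n + 1) * b + max_level_potential n"
proof (cases "None \<in> P")
  case True
  have "0 \<le> 9 * (real n + 1) * b" using assms(3) by simp
  moreover have "potential n P = level_potential n P" using True by (simp add: potential_def)
  ultimately show ?thesis using level_potential_bounds[of n P] by linarith
next
  case False
  have "Min (C ` P) \<le> C Z" using assms(1,2) by simp
  then have "real (Min (C ` P)) \<le> b" using assms(3) by (meson of_nat_le_iff order_trans)
  then have "9 * (real n + 1) * real (Min (C ` P)) \<le> 9 * (real n + 1) * b"
    by (rule mult_left_mono) simp
  then show ?thesis using False by (simp add: potential_def)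
qed

lemma potential_nonneg: "0 \<le> potential n P"
  using level_potential_bounds[of n P] by (simp add: potential_def)

text \<open>Drift in phase 1: a deletion from a smallest tree lowers the minimal complexity.\<close>

lemma drift_without_empty_tree:
  assumes mut: "admissible_mutation n mut" and inv: "pop_inv n P"
    and no_empty: "None \<notin> P"
  shows "1 + (\<integral>\<^sup>+ P'. ennreal (potential n P') \<partial>smo_step n mut P) \<le> ennreal (potential n P)"
proof -
  define m where "m = Min (C ` P)"
  define d where "d = 9 * (real n + 1)"
  have fin: "finite P" "P \<noteq> {}" using inv by (auto simp: pop_inv_def)
  have "m \<in> C ` P" unfolding m_def using fin by (intro Min_in) auto
  then obtain t where X: "Some t \<in> P" "tsize t = m"
    using no_empty by (auto simp: C_def split: option.splits)
  have pot: "potential n P = d * real m + max_level_potential n"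
    using no_empty by (simp add: potential_def m_def d_def)
  show ?thesis
  proof (rule expected_potential_drop[where d = d and E = "{P'. \<exists>Z\<in>P'. C Z < m}"])
    fix P' assume "P' \<in> set_pmf (smo_step n mut P)"
    then obtain Y where P': "P' = accept n P Y" "pop_inv n P'"
      using smo_step_support[OF mut inv] by blast
    then have fin': "finite P'" by (simp add: pop_inv_def)
    obtain Z where "Z \<in> P'" "C Z \<le> m"
      using accept_keeps[OF X(1)] X(2) P'(1) by (force simp: wdom_def C_def)
    then have "potential n P' \<le> d * real m + max_level_potential n"
      unfolding d_def by (intro potential_le_C[OF fin']) auto
    then show "0 \<le> potential n P' \<and> potential n P' \<le> potential n P"
      by (simp add: pot potential_nonneg)
    assume "P' \<in> {P'. \<exists>Z\<in>P'. C Z < m}"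
    then obtain Z where "Z \<in> P'" "real (C Z) \<le> real m - 1" by force
    then have "potential n P' \<le> d * (real m - 1) + max_level_potential n"
      unfolding d_def by (rule potential_le_C[OF fin'])
    then show "potential n P' \<le> potential n P - d" by (simp add: pot algebra_simps)
  next
    show "0 \<le> d" by (simp add: d_def)
    have "1 / d = measure_pmf.prob (delete_op (Some t)) {Y. C Y < m} / 3 / (3 * (real n + 1))"
      using delete_op_shrinks[of t] X(2)
      by (simp add: d_def measure_pmf.prob_eq_1 AE_measure_pmf_iff subset_eq)
    also have "\<dots> \<le> measure_pmf.prob (hvl n (Some t)) {Y. C Y < m} / (3 * (real n + 1))"
      using hvl_delete_prob by (rule divide_right_mono) simp
    also have "\<dots> \<le> measure_pmf.prob (smo_step n mut P) {P'. \<exists>Z\<in>P'. C Z < m}"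
      using accept_smaller[OF fin(1)] by (intro smo_step_prob_ge[OF mut inv X(1)]) (auto simp: m_def)
    finally show "1 \<le> d * measure_pmf.prob (smo_step n mut P) {P'. \<exists>Z\<in>P'. C Z < m}"
      by (simp add: d_def field_simps)
  qed
qed

text \<open>Drift in phase 2: an insertion into the tree with vector \<open>(k, 2k - 1)\<close>, \<open>k\<close> the
  current level, raises the level.\<close>

lemma drift_with_empty_tree:
  assumes n: "n \<ge> 1" and mut: "admissible_mutation n mut" and inv: "pop_inv n P"
    and empty: "None \<in> P" and not_covered: "\<not> covers_front n P"
  shows "1 + (\<integral>\<^sup>+ P'. ennreal (potential n P') \<partial>smo_step n mut P) \<le> ennreal (potential n P)"
proof -
  define k where "k = level n P"
  have covers: "covers_upto n k P" using level_covers[OF empty] by (simp add: k_def)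
  have "k \<noteq> n" using covers not_covered covers_upto_front by blast
  then have k: "k < n" using level_covers(2)[OF empty, of n] by (simp add: k_def)
  have pot: "potential n P = (\<Sum>i\<in>{k..<n}. level_weight n i)"
    using empty by (simp add: potential_def level_potential_def k_def)
  show ?thesis
  proof (rule expected_potential_drop[where d = "level_weight n k" and E = "{P'. covers_upto n (Suc k) P'}"])
    fix P' assume "P' \<in> set_pmf (smo_step n mut P)"
    then obtain Y where P': "P' = accept n P Y" using smo_step_support[OF mut inv] by blast
    have "None \<in> P'" using covers_upto_accept[of n 0 P Y] empty P' by (simp add: covers_upto_0)
    then have pot': "potential n P' = level_potential n P'" by (simp add: potential_def)
    have "level_potential n P' \<le> potential n P"
      unfolding pot using covers_upto_accept[OF covers] P' k by (intro level_potential_le) auto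
    then show "0 \<le> potential n P' \<and> potential n P' \<le> potential n P"
      using level_potential_bounds[of n P'] pot' by simp
    assume "P' \<in> {P'. covers_upto n (Suc k) P'}"
    then have "level_potential n P' \<le> (\<Sum>i\<in>{Suc k..<n}. level_weight n i)"
      using k by (intro level_potential_le) auto
    also have "\<dots> = potential n P - level_weight n k"
      using sum.atLeast_Suc_lessThan[OF k, of "level_weight n"] by (simp add: pot)
    finally show "potential n P' \<le> potential n P - level_weight n k" by (simp add: pot')
  next
    show "0 \<le> level_weight n k" using level_weight_pos[OF k] by simp
    obtain Z where Z: "Z \<in> P" "obj n Z = opt_obj k" using covers by (auto simp: covers_upto_def)
    have "1 / level_weight n k = real (n - k) / real (2 * n) / 3 / (3 * (real n + 1))"
      using k n by (simp add: level_weight_def of_nat_diff field_simps)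
    also have "\<dots> \<le> measure_pmf.prob (insert_op n Z) {Y. obj n Y = opt_obj (Suc k)} / 3
        / (3 * (real n + 1))"
      using insert_op_success[OF n Z(2)] by (intro divide_right_mono) auto
    also have "\<dots> \<le> measure_pmf.prob (hvl n Z) {Y. obj n Y = opt_obj (Suc k)} / (3 * (real n + 1))"
      using hvl_insert_prob by (rule divide_right_mono) simp
    also have "\<dots> \<le> measure_pmf.prob (smo_step n mut P) {P'. covers_upto n (Suc k) P'}"
      using covers_upto_Suc_accept[OF covers] by (intro smo_step_prob_ge[OF mut inv Z(1)]) auto
    finally show "1 \<le> level_weight n k * measure_pmf.prob (smo_step n mut P) {P'. covers_upto n (Suc k) P'}"
      using level_weight_pos[OF k] by (simp add: field_simps)
  qed
qed

lemma opt_time_le_potential: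
  assumes n: "n \<ge> 1" and mut: "admissible_mutation n mut" and X0: "valid n X0"
  shows "opt_time n mut X0 \<le> ennreal (potential n {X0})"
proof -
  have "(\<lambda>P. if covers_front n P then return_pmf P else smo_step n mut P)
      = stopped (covers_front n) (smo_step n mut)"
    by (simp add: fun_eq_iff stopped_def)
  then have "opt_time n mut X0 = (\<Sum>t. ennreal (measure_pmf.prob
      (((\<lambda>D. bind_pmf D (stopped (covers_front n) (smo_step n mut))) ^^ t) (return_pmf {X0}))
      {P. \<not> covers_front n P}))"
    by (simp add: opt_time_def stopped_dist_def)
  also have "\<dots> \<le> ennreal (potential n {X0})"
  proof (rule stopped_chain_expected_time[where I = "pop_inv n"])
    show "pop_inv n {X0}" using X0 by (simp add: pop_inv_def)
    show "pop_inv n P'" if "pop_inv n P" "P' \<in> set_pmf (smo_step n mut P)" for P P'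
      using smo_step_support[OF mut that] by blast
    show "1 + (\<integral>\<^sup>+ P'. ennreal (potential n P') \<partial>smo_step n mut P) \<le> ennreal (potential n P)"
      if "pop_inv n P" "\<not> covers_front n P" for P
      using drift_with_empty_tree[OF n mut that(1) _ that(2)] drift_without_empty_tree[OF mut that(1)]
      by blast
  qed
  finally show ?thesis .
qed

lemma harm_le_1_plus_ln: "n \<ge> 1 \<Longrightarrow> (harm n :: real) \<le> 1 + ln (real n)"
  using euler_mascheroni_sequence_decreasing[of 1 n] by (simp add: harm_def)

lemma max_level_potential_harm: "max_level_potential n = 18 * real n * (real n + 1) * harm n"
proof -
  have "max_level_potential n = (\<Sum>j<n. 18 * real n * (real n + 1) * inverse (real (Suc (n - Suc j))))"
    unfolding max_level_potential_def level_weight_def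
    by (rule sum.cong) (auto simp: of_nat_diff divide_inverse)
  also have "\<dots> = (\<Sum>j<n. 18 * real n * (real n + 1) * inverse (real (Suc j)))"
    by (rule sum.nat_diff_reindex)
  finally show ?thesis by (simp add: harm_altdef sum_distrib_left)
qed

lemma potential_init_bound:
  assumes n: "n \<ge> 3"
  shows "potential n {X0} \<le> 72 * (real n * real (C X0) + real n ^ 2 * ln (real n))"
proof -
  have ln: "1 \<le> ln (real n)"
    using exp_le n ln_ge_iff[of "real n" 1] by simp
  have "9 * (real n + 1) \<le> 72 * real n" using n by simp
  then have size: "9 * (real n + 1) * real (C X0) \<le> 72 * real n * real (C X0)"
    by (rule mult_right_mono) simp
  have "18 * real n * (real n + 1) \<le> 18 * real n * (2 * real n)"
    using n by (intro mult_left_mono) auto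
  moreover have "harm n \<le> 2 * ln (real n)"
    using harm_le_1_plus_ln[of n] n ln by simp
  ultimately have "max_level_potential n \<le> 18 * real n * (2 * real n) * (2 * ln (real n))"
    using n unfolding max_level_potential_harm by (intro mult_mono) (auto simp: harm_nonneg)
  moreover have "potential n {X0} \<le> 9 * (real n + 1) * real (C X0) + max_level_potential n"
    by (rule potential_le_C) auto
  ultimately show ?thesis using size by (simp add: power2_eq_square algebra_simps)
qed

theorem theorem5:
  shows "\<exists>c::real. c > 0 \<and> (\<exists>n0::nat. \<forall>n \<ge> n0. \<forall>X0. valid n X0 \<longrightarrow>
     opt_time n (mut_single n) X0 \<le> ennreal (c * (real n * real (C X0) + real n ^ 2 * ln (real n)))
   \<and> opt_time n (mut_multi n) X0 \<le> ennreal (c * (real n * real (C X0) + real n ^ 2 * ln (real n))))"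
proof (intro exI[of _ "72::real"] conjI exI[of _ "3::nat"] allI impI)
  fix n :: nat and X0 assume n: "3 \<le> n" and X0: "valid n X0"
  then have n1: "n \<ge> 1" by simp
  have bound: "ennreal (potential n {X0})
      \<le> ennreal (72 * (real n * real (C X0) + real n ^ 2 * ln (real n)))"
    using potential_init_bound[OF n] by (rule ennreal_leI)
  show "opt_time n (mut_single n) X0 \<le> ennreal (72 * (real n * real (C X0) + real n ^ 2 * ln (real n)))"
    using opt_time_le_potential[OF n1 admissible_mut_single[OF n1] X0] bound by (rule order_trans)
  show "opt_time n (mut_multi n) X0 \<le> ennreal (72 * (real n * real (C X0) + real n ^ 2 * ln (real n)))"
    using opt_time_le_potential[OF n1 admissible_mut_multi[OF n1] X0] bound by (rule order_trans)
qed simp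

end
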